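(* For each $i\ge1$ let $f_i$ be a non-negative completely multiplicative function with $f_i(p) < 1$ for every prime $p$, and let $y_i \to \infty$ be a sequence of parameters. Define $\alpha_i = \frac{(\log \log y_i)^2}{\log y_i}$. Suppose that for all $i$ \[ \sum_p \log p\, \frac{f_i(p)}{1-f_i(p)} < \log y_i - \frac{\log y_i}{\log \log y_i}\] and that \[\sum_{\substack{p,\,k\ge1\\ k \log p > \log y_i/(\log \log y_i)^4}} f_i(p)^k p^{k\alpha_i} = o(1), \qquad i \to \infty,\] the sums being over primes $p$. Then \[\sum_{n \leq y_i} f_i(n) = (1 + o(1)) \sum_{n = 1}^\infty f_i(n), \qquad i \to \infty.\] *)

theory Defs
  imports "HOL-Analysis.Analysis" "HOL-Library.Landau_Symbols" "HOL-Computational_Algebra.Primes"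
begin

text \<open>Completely multiplicative arithmetic function (values at positive integers;
  the value at 0 is irrelevant).\<close>
definition completely_multiplicative :: "(nat \<Rightarrow> real) \<Rightarrow> bool" where
  "completely_multiplicative f \<longleftrightarrow>
     f 1 = 1 \<and> (\<forall>m n. m > 0 \<longrightarrow> n > 0 \<longrightarrow> f (m * n) = f m * f n)"

end

theory Submission
  imports Defs
begin

text \<open>Give each n \<ge> 1 the weight f n. Because f is completely multiplicative with f p < 1, the
  prime exponents of n are then independent geometric variables. From ln n = \<Sum> ln p over the
  prime powers p^k dividing n and f (p^k * m) = f p ^ k * f m, the weighted mean of ln n is
  L = \<Sum> ln p * f p / (1 - f p) over primes p, and its variance is V = \<Sum> k * (ln p)^2 * f p ^ k
  over primes p and k \<ge> 1. These rearrangements are done in ennreal, where they need no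
  summability side conditions; the total weight S is finite because the partial sums satisfy
  \<Sum> f n * ln n \<le> L * \<Sum> f n.

  The hypothesis L < ln y - ln y / ln ln y puts ln y more than ln y / ln ln y above the mean,
  so by Chebyshev's inequality the weight of the n > y is at most V * S * (ln ln y / ln y)^2.
  Split V at k * ln p = ln y / (ln ln y)^4: the small terms contribute at most
  L * ln y / (ln ln y)^4, and on the large ones Rankin's trick
  k * (ln p)^2 \<le> 4 / \<alpha>^2 * p powr (k * \<alpha>) with \<alpha> = (ln ln y)^2 / ln y
  leaves 4 / \<alpha>^2 times the sum s that is assumed to tend to 0.
  The relative error is therefore at most (1 + 4 * s) / (ln ln y)^2.\<close>

section \<open>Unconditional sums in ennreal\<close>

lemma linorder_topology_separate_above:
  fixes y :: "'a::linorder_topology"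
  assumes "open T" "y \<in> T"
  obtains U V where "open U" "open V" "y \<in> U" "U \<inter> V = {}" "{y<..} - T \<subseteq> V"
proof (cases "\<exists>z. y < z")
  case True
  then obtain b where b: "y < b" "{y..<b} \<subseteq> T"
    using open_right[OF assms] by blast
  show ?thesis
  proof (cases "\<exists>z. y < z \<and> z < b")
    case True
    then obtain z where "y < z" "z < b" by blast
    moreover have "{y<..} - T \<subseteq> {b..}"
      using b(2) by (auto simp: subset_iff) (meson leI less_imp_le)
    ultimately show ?thesis by (intro that[of "{..<z}" "{z<..}"]) fastforce+
  next
    case False
    with b show ?thesis by (intro that[of "{..<b}" "{y<..}"]) auto
  qed
qed (auto intro: that[of UNIV "{}"])

lemma linorder_topology_separate_below:
  fixes y :: "'a::linorder_topology"
  assumes "open T" "y \<in> T"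
  obtains U V where "open U" "open V" "y \<in> U" "U \<inter> V = {}" "{..<y} - T \<subseteq> V"
proof (cases "\<exists>z. z < y")
  case True
  then obtain b where b: "b < y" "{b<..y} \<subseteq> T"
    using open_left[OF assms] by blast
  show ?thesis
  proof (cases "\<exists>z. b < z \<and> z < y")
    case True
    then obtain z where "b < z" "z < y" by blast
    moreover have "{..<y} - T \<subseteq> {..b}"
      using b(2) by (auto simp: subset_iff) (meson leI less_imp_le)
    ultimately show ?thesis by (intro that[of "{z<..}" "{..<z}"]) fastforce+
  next
    case False
    with b show ?thesis by (intro that[of "{b<..}" "{..<y}"]) auto
  qed
qed (auto intro: that[of UNIV "{}"])

(* Regularity of ennreal is needed by has_sum_SigmaD, i.e. Fubini for unconditional sums. *)
instance linorder_topology \<subseteq> t3_space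
proof
  fix S :: "'a set" and y assume S: "closed S" "y \<notin> S"
  then have T: "open (- S)" "y \<in> - S" by auto
  obtain U1 V1 where 1: "open U1" "open V1" "y \<in> U1" "U1 \<inter> V1 = {}" "{y<..} - - S \<subseteq> V1"
    by (rule linorder_topology_separate_above[OF T])
  obtain U2 V2 where 2: "open U2" "open V2" "y \<in> U2" "U2 \<inter> V2 = {}" "{..<y} - - S \<subseteq> V2"
    by (rule linorder_topology_separate_below[OF T])
  have "S \<subseteq> V1 \<union> V2"
  proof
    fix s assume "s \<in> S"
    with S(2) have "s < y \<or> y < s" by (metis neqE)
    with \<open>s \<in> S\<close> 1(5) 2(5) show "s \<in> V1 \<union> V2" by auto
  qed
  with 1 2 show "\<exists>U V. open U \<and> open V \<and> y \<in> U \<and> S \<subseteq> V \<and> U \<inter> V = {}"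
    by (intro exI[of _ "U1 \<inter> U2"] exI[of _ "V1 \<union> V2"]) auto
qed

(* The library's summable_on_ennreal only covers functions of the form ennreal_of_enat \<circ> g. *)
lemma ennreal_summable_on [simp]: "(g :: 'a \<Rightarrow> ennreal) summable_on A"
  by (simp add: nonneg_summable_on_complete)

lemma infsum_Sigma_ennreal:
  fixes g :: "'a \<times> 'b \<Rightarrow> ennreal"
  shows "infsum g (Sigma A B) = (\<Sum>\<^sub>\<infinity>x\<in>A. \<Sum>\<^sub>\<infinity>y\<in>B x. g (x, y))"
proof -
  have "((\<lambda>x. \<Sum>\<^sub>\<infinity>y\<in>B x. g (x, y)) has_sum infsum g (Sigma A B)) A"
    by (rule has_sum_SigmaD[OF has_sum_infsum]) (auto intro: has_sum_infsum)
  then show ?thesis by (simp add: infsumI)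
qed

lemma infsum_cmult_left_ennreal:
  fixes g :: "'a \<Rightarrow> ennreal"
  shows "(\<Sum>\<^sub>\<infinity>x\<in>A. c * g x) = c * infsum g A"
proof -
  have "(\<Sum>\<^sub>\<infinity>x\<in>A. c * g x) = (SUP F\<in>{F. finite F \<and> F \<subseteq> A}. c * sum g F)"
    by (subst nonneg_infsum_complete) (simp_all add: sum_distrib_left)
  also have "\<dots> = c * infsum g A"
    by (simp add: SUP_mult_left_ennreal nonneg_infsum_complete)
  finally show ?thesis .
qed

lemma infsum_Times_mult_ennreal:
  fixes g :: "'a \<Rightarrow> ennreal" and h :: "'b \<Rightarrow> ennreal"
  shows "(\<Sum>\<^sub>\<infinity>(x, y)\<in>A \<times> B. g x * h y) = infsum g A * infsum h B"
proof -
  have "(\<Sum>\<^sub>\<infinity>(x, y)\<in>A \<times> B. g x * h y) = (\<Sum>\<^sub>\<infinity>x\<in>A. g x * infsum h B)"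
    by (simp add: infsum_Sigma_ennreal infsum_cmult_left_ennreal)
  also have "\<dots> = infsum g A * infsum h B"
    by (simp add: mult.commute[of _ "infsum h B"] infsum_cmult_left_ennreal)
  finally show ?thesis .
qed

lemma infsum_mono_set_ennreal:
  fixes g :: "'a \<Rightarrow> ennreal"
  shows "A \<subseteq> B \<Longrightarrow> infsum g A \<le> infsum g B"
  by (rule infsum_mono_neutral) auto

lemma ennreal_infsum:
  fixes f :: "'a \<Rightarrow> real"
  assumes "f summable_on A" and "\<And>x. x \<in> A \<Longrightarrow> f x \<ge> 0"
  shows "ennreal (infsum f A) = (\<Sum>\<^sub>\<infinity>x\<in>A. ennreal (f x))"
proof -
  have "ennreal (infsum f A) = (SUP F\<in>{F. finite F \<and> F \<subseteq> A}. ennreal (sum f F))"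
    using assms by (rule infsum_nonneg_is_SUPREMUM_ennreal)
  also have "\<dots> = (SUP F\<in>{F. finite F \<and> F \<subseteq> A}. (\<Sum>x\<in>F. ennreal (f x)))"
    using assms(2) by (intro SUP_cong refl sum_ennreal[symmetric]) auto
  also have "\<dots> = (\<Sum>\<^sub>\<infinity>x\<in>A. ennreal (f x))"
    by (simp add: nonneg_infsum_complete)
  finally show ?thesis .
qed

section \<open>Mean and variance of ln n\<close>

lemma completely_multiplicative_mult:
  "completely_multiplicative f \<Longrightarrow> m > 0 \<Longrightarrow> n > 0 \<Longrightarrow> f (m * n) = f m * f n"
  by (simp add: completely_multiplicative_def)

lemma completely_multiplicative_power:
  assumes "completely_multiplicative f" and "p > 0"
  shows "f (p ^ k) = f p ^ k"
proof (induction k)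
  case 0
  then show ?case using assms(1) by (simp add: completely_multiplicative_def)
next
  case (Suc k)
  then show ?case using assms completely_multiplicative_mult[OF assms(1), of p "p ^ k"] by simp
qed

definition prime_exponent_pairs :: "(nat \<times> nat) set" where
  "prime_exponent_pairs = {(p, k). prime p \<and> k \<ge> 1}"

definition prime_power_divisors :: "nat \<Rightarrow> (nat \<times> nat) set" where
  "prime_power_divisors n = {(p, k). prime p \<and> k \<ge> 1 \<and> p ^ k dvd n}"

lemma prime_power_divisors_eq:
  assumes "n > 0"
  shows "prime_power_divisors n = Sigma (prime_factors n) (\<lambda>p. {1..multiplicity p n})"
proof safe
  fix p k assume "(p, k) \<in> prime_power_divisors n"
  then have pk: "prime p" "k \<ge> 1" "p ^ k dvd n" by (auto simp: prime_power_divisors_def)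
  then have "p dvd n" using dvd_power[of k p] dvd_trans by auto
  with pk assms show "p \<in> prime_factors n" by (auto simp: in_prime_factors_iff)
  have "k \<le> multiplicity p n"
    using pk assms by (intro multiplicity_geI) (auto simp: prime_gt_1_nat)
  with pk show "k \<in> {1..multiplicity p n}" by auto
next
  fix p k assume "p \<in> prime_factors n" "k \<in> {1..multiplicity p n}"
  then show "(p, k) \<in> prime_power_divisors n"
    by (auto simp: prime_power_divisors_def multiplicity_dvd' in_prime_factors_imp_prime)
qed

lemma finite_prime_power_divisors: "n > 0 \<Longrightarrow> finite (prime_power_divisors n)"
  by (simp add: prime_power_divisors_eq)

lemma ln_eq_sum_prime_power_divisors:
  assumes "n > 0"
  shows "ln (real n) = (\<Sum>(p, k)\<in>prime_power_divisors n. ln (real p))"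
proof -
  have "(\<Sum>(p, k)\<in>prime_power_divisors n. ln (real p)) =
        (\<Sum>p\<in>prime_factors n. real (multiplicity p n) * ln (real p))"
    by (simp add: prime_power_divisors_eq[OF assms] sum.Sigma[symmetric])
  also have "\<dots> = ln (\<Prod>p\<in>prime_factors n. real p ^ multiplicity p n)"
    by (simp add: ln_prod ln_realpow in_prime_factors_imp_prime prime_gt_0_nat)
  also have "(\<Prod>p\<in>prime_factors n. real p ^ multiplicity p n) = real n"
    by (subst (2) prime_factorization_nat[OF assms]) simp
  finally show ?thesis ..
qed

lemma ln_prime_nonneg: "prime p \<Longrightarrow> ln (real p) \<ge> 0"
  using prime_gt_1_nat[of p] by simp

lemma mult_ln_eq_sum_prime_power_divisors:
  assumes cm: "completely_multiplicative f" and n: "n > 0"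
  shows "f n * ln (real n) =
         (\<Sum>(p, k)\<in>prime_power_divisors n. ln (real p) * f p ^ k * f (n div p ^ k))"
proof -
  have "f n = f p ^ k * f (n div p ^ k)" if "(p, k) \<in> prime_power_divisors n" for p k
  proof -
    from that have "prime p" "p ^ k dvd n" by (auto simp: prime_power_divisors_def)
    then have "n = p ^ k * (n div p ^ k)" "n div p ^ k > 0" "p > 0"
      using n by (auto simp: prime_gt_0_nat dvd_div_eq_0_iff)
    then show ?thesis
      by (metis cm completely_multiplicative_mult completely_multiplicative_power zero_less_power)
  qed
  then show ?thesis
    unfolding ln_eq_sum_prime_power_divisors[OF n] sum_distrib_left
    by (intro sum.cong refl) auto
qed

lemma infsum_ln_split_prime_power:
  fixes f w :: "nat \<Rightarrow> real"
  assumes cm: "completely_multiplicative f" and nn: "\<And>n. f n \<ge> 0"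
    and A: "A \<subseteq> {1..}" and w: "\<And>n. n \<in> A \<Longrightarrow> w n \<ge> 0"
  shows "(\<Sum>\<^sub>\<infinity>n\<in>A. ennreal (f n * ln (real n) * w n)) =
    (\<Sum>\<^sub>\<infinity>((p, k), m)\<in>{((p, k), m). (p, k) \<in> prime_exponent_pairs \<and> m \<ge> 1 \<and> p ^ k * m \<in> A}.
        ennreal (ln (real p) * f p ^ k * f m * w (p ^ k * m)))"
proof -
  define g where "g = (\<lambda>(n, (p, k)). ennreal (ln (real p) * f p ^ k * f (n div p ^ k) * w n))"
  have "ennreal (f n * ln (real n) * w n) = (\<Sum>\<^sub>\<infinity>pk\<in>prime_power_divisors n. g (n, pk))"
    if "n \<in> A" for n
  proof -
    have n0: "n > 0" using that A by auto
    have "ennreal (f n * ln (real n) * w n) = (\<Sum>pk\<in>prime_power_divisors n. g (n, pk))"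
      unfolding mult_ln_eq_sum_prime_power_divisors[OF cm n0] sum_distrib_right
      using nn w[OF that] by (subst sum_ennreal[symmetric])
        (auto intro!: sum.cong simp: g_def prime_power_divisors_def ln_prime_nonneg)
    then show ?thesis
      using n0 by (simp add: finite_prime_power_divisors)
  qed
  then have "(\<Sum>\<^sub>\<infinity>n\<in>A. ennreal (f n * ln (real n) * w n)) =
             (\<Sum>\<^sub>\<infinity>n\<in>A. \<Sum>\<^sub>\<infinity>pk\<in>prime_power_divisors n. g (n, pk))"
    by (rule infsum_cong)
  also have "\<dots> = infsum g (Sigma A prime_power_divisors)"
    by (rule infsum_Sigma_ennreal[symmetric])
  also have "\<dots> = (\<Sum>\<^sub>\<infinity>((p, k), m)\<in>{((p, k), m). (p, k) \<in> prime_exponent_pairs \<and> m \<ge> 1 \<and> p ^ k * m \<in> A}.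
        ennreal (ln (real p) * f p ^ k * f m * w (p ^ k * m)))"
  proof (rule infsum_reindex_bij_witness[where j = "\<lambda>(n, (p, k)). ((p, k), n div p ^ k)"
        and i = "\<lambda>((p, k), m). (p ^ k * m, (p, k))"])
    fix a assume "a \<in> Sigma A prime_power_divisors"
    then obtain n p k where a: "a = (n, (p, k))" "n \<in> A" "prime p" "k \<ge> 1" "p ^ k dvd n"
      by (auto simp: prime_power_divisors_def)
    then have "n > 0" using A by auto
    with a show "(\<lambda>((p, k), m). (p ^ k * m, (p, k))) ((\<lambda>(n, (p, k)). ((p, k), n div p ^ k)) a) = a"
      and "(\<lambda>(n, (p, k)). ((p, k), n div p ^ k)) a
             \<in> {((p, k), m). (p, k) \<in> prime_exponent_pairs \<and> m \<ge> 1 \<and> p ^ k * m \<in> A}"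
      and "(\<lambda>((p, k), m). ennreal (ln (real p) * f p ^ k * f m * w (p ^ k * m)))
             ((\<lambda>(n, (p, k)). ((p, k), n div p ^ k)) a) = g a"
      by (auto simp: g_def prime_exponent_pairs_def)
  next
    fix b assume "b \<in> {((p, k), m). (p, k) \<in> prime_exponent_pairs \<and> m \<ge> 1 \<and> p ^ k * m \<in> A}"
    then obtain p k m where b: "b = ((p, k), m)" "prime p" "k \<ge> 1" "p ^ k * m \<in> A"
      by (auto simp: prime_exponent_pairs_def)
    then show "(\<lambda>(n, (p, k)). ((p, k), n div p ^ k)) ((\<lambda>((p, k), m). (p ^ k * m, (p, k))) b) = b"
      and "(\<lambda>((p, k), m). (p ^ k * m, (p, k))) b \<in> Sigma A prime_power_divisors"
      by (auto simp: prime_power_divisors_def prime_gt_0_nat)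
  qed
  finally show ?thesis .
qed

corollary infsum_ln_split_prime_power_all:
  fixes f w :: "nat \<Rightarrow> real"
  assumes "completely_multiplicative f" and "\<And>n. f n \<ge> 0" and "\<And>n. n \<ge> 1 \<Longrightarrow> w n \<ge> 0"
  shows "(\<Sum>\<^sub>\<infinity>n\<in>{1..}. ennreal (f n * ln (real n) * w n)) =
    (\<Sum>\<^sub>\<infinity>((p, k), m)\<in>prime_exponent_pairs \<times> {1..}. ennreal (ln (real p) * f p ^ k * f m * w (p ^ k * m)))"
proof -
  have "{((p, k), m). (p, k) \<in> prime_exponent_pairs \<and> m \<ge> 1 \<and> p ^ k * m \<in> {1..}} =
        prime_exponent_pairs \<times> {1..}"
    by (auto simp: prime_exponent_pairs_def prime_gt_0_nat Suc_le_eq)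
  then show ?thesis
    using infsum_ln_split_prime_power[OF assms(1,2), of "{1..}" w] assms(3) by simp
qed

definition log_mean :: "(nat \<Rightarrow> real) \<Rightarrow> ennreal" where
  "log_mean f = (\<Sum>\<^sub>\<infinity>(p, k)\<in>prime_exponent_pairs. ennreal (ln (real p) * f p ^ k))"

definition log_variance :: "(nat \<Rightarrow> real) \<Rightarrow> ennreal" where
  "log_variance f = (\<Sum>\<^sub>\<infinity>(p, k)\<in>prime_exponent_pairs. ennreal (real k * ln (real p) ^ 2 * f p ^ k))"

lemma infsum_geometric_ennreal:
  fixes x c :: real
  assumes "0 \<le> x" "x < 1" "0 \<le> c"
  shows "(\<Sum>\<^sub>\<infinity>k\<in>{1..}. ennreal (c * x ^ k)) = ennreal (c * (x / (1 - x)))"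
proof -
  have "((\<lambda>n. x ^ n) has_sum (1 / (1 - x))) UNIV"
    by (rule sums_nonneg_imp_has_sum) (use assms in \<open>auto intro!: geometric_sums\<close>)
  then have geom: "(\<Sum>\<^sub>\<infinity>n\<in>UNIV. ennreal (x ^ n)) = ennreal (1 / (1 - x))"
    using assms by (subst ennreal_infsum[symmetric]) (auto simp: has_sum_imp_summable infsumI)
  have "(\<Sum>\<^sub>\<infinity>k\<in>{1..}. ennreal (c * x ^ k)) = (\<Sum>\<^sub>\<infinity>n\<in>UNIV. ennreal (c * x) * ennreal (x ^ n))"
    using assms by (intro infsum_reindex_bij_witness[where j = "\<lambda>k. k - 1" and i = Suc])
      (auto simp: ennreal_mult[symmetric] mult_ac dest!: Suc_le_D)
  also have "\<dots> = ennreal (c * (x / (1 - x)))"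
    using assms by (subst infsum_cmult_left_ennreal) (simp add: geom ennreal_mult[symmetric])
  finally show ?thesis .
qed

lemma log_mean_eq:
  assumes nn: "\<And>n. f n \<ge> 0" and lt1: "\<And>p. prime p \<Longrightarrow> f p < 1"
    and summable: "(\<lambda>p. ln (real p) * (f p / (1 - f p))) summable_on {p. prime p}"
  shows "log_mean f = ennreal (\<Sum>\<^sub>\<infinity>p\<in>{p. prime p}. ln (real p) * (f p / (1 - f p)))"
proof -
  have pairs: "prime_exponent_pairs = Sigma {p. prime p} (\<lambda>_. {1..})"
    by (auto simp: prime_exponent_pairs_def)
  have "log_mean f = (\<Sum>\<^sub>\<infinity>p\<in>{p. prime p}. \<Sum>\<^sub>\<infinity>k\<in>{1..}. ennreal (ln (real p) * f p ^ k))"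
    unfolding log_mean_def pairs infsum_Sigma_ennreal by simp
  also have "\<dots> = (\<Sum>\<^sub>\<infinity>p\<in>{p. prime p}. ennreal (ln (real p) * (f p / (1 - f p))))"
    by (intro infsum_cong infsum_geometric_ennreal) (auto simp: nn lt1 ln_prime_nonneg)
  also have "\<dots> = ennreal (\<Sum>\<^sub>\<infinity>p\<in>{p. prime p}. ln (real p) * (f p / (1 - f p)))"
    by (rule ennreal_infsum[OF summable, symmetric]) (auto simp: nn lt1 ln_prime_nonneg less_imp_le)
  finally show ?thesis .
qed

lemma sum_ln_le_log_mean:
  fixes f :: "nat \<Rightarrow> real"
  assumes cm: "completely_multiplicative f" and nn: "\<And>n. f n \<ge> 0"
    and mean: "log_mean f = ennreal a" and a0: "a \<ge> 0"
  shows "(\<Sum>n\<in>{1..N}. f n * ln (real n)) \<le> a * (\<Sum>n\<in>{1..N}. f n)"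
proof -
  have "ennreal (\<Sum>n\<in>{1..N}. f n * ln (real n)) = (\<Sum>n\<in>{1..N}. ennreal (f n * ln (real n)))"
    by (rule sum_ennreal[symmetric]) (simp add: nn)
  also have "\<dots> = (\<Sum>\<^sub>\<infinity>n\<in>{1..N}. ennreal (f n * ln (real n) * 1))"
    by simp
  also have "\<dots> = (\<Sum>\<^sub>\<infinity>((p, k), m)\<in>{((p, k), m). (p, k) \<in> prime_exponent_pairs \<and> m \<ge> 1 \<and> p ^ k * m \<in> {1..N}}.
        ennreal (ln (real p) * f p ^ k * f m * 1))"
    using infsum_ln_split_prime_power[OF cm nn, of "{1..N}" "\<lambda>_. 1"] by simp
  also have "\<dots> \<le> (\<Sum>\<^sub>\<infinity>((p, k), m)\<in>prime_exponent_pairs \<times> {1..N}. ennreal (ln (real p) * f p ^ k * f m * 1))"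
  proof (rule infsum_mono_set_ennreal, safe)
    fix p k m assume pk: "(p, k) \<in> prime_exponent_pairs" and "1 \<le> m" "p ^ k * m \<in> {1..N}"
    moreover from pk have "m \<le> p ^ k * m"
      by (auto simp: prime_exponent_pairs_def Suc_le_eq prime_gt_0_nat)
    ultimately show "m \<in> {1..N}" by (meson atLeastAtMost_iff order_trans)
  qed
  also have "\<dots> = (\<Sum>\<^sub>\<infinity>(pk, m)\<in>prime_exponent_pairs \<times> {1..N}.
                      (\<lambda>(p, k). ennreal (ln (real p) * f p ^ k)) pk * ennreal (f m))"
    by (intro infsum_cong) (auto simp: prime_exponent_pairs_def ennreal_mult'' ln_prime_nonneg nn)
  also have "\<dots> = log_mean f * (\<Sum>\<^sub>\<infinity>m\<in>{1..N}. ennreal (f m))"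
    unfolding log_mean_def by (rule infsum_Times_mult_ennreal)
  also have "\<dots> = ennreal (a * (\<Sum>n\<in>{1..N}. f n))"
    using a0 nn by (simp add: mean ennreal_mult sum_nonneg)
  finally show ?thesis
    using a0 nn by (simp add: sum_nonneg)
qed

lemma sum_le_of_sum_ln_le:
  fixes f :: "nat \<Rightarrow> real"
  assumes nn: "\<And>n. f n \<ge> 0" and a0: "a \<ge> 0"
    and ln_le: "(\<Sum>n\<in>{1..N}. f n * ln (real n)) \<le> a * (\<Sum>n\<in>{1..N}. f n)"
  shows "(\<Sum>n\<in>{1..N}. f n) \<le> (1 + a) * (\<Sum>n\<in>{1..nat \<lceil>exp (a + 1)\<rceil>}. f n)"
proof -
  define M where "M = nat \<lceil>exp (a + 1)\<rceil>"
  have "f n \<le> f n * (ln (real n) - a) + (1 + a) * (if n \<le> M then f n else 0)"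
    if "n \<ge> 1" for n
  proof (cases "n \<le> M")
    case True
    with that nn[of n] show ?thesis by (simp add: algebra_simps)
  next
    case False
    then have "exp (a + 1) \<le> real n" unfolding M_def by linarith
    then have "1 \<le> ln (real n) - a"
      by (metis add.commute exp_gt_zero exp_le_cancel_iff exp_ln le_diff_eq order_less_le_trans)
    with False nn[of n] show ?thesis
      using mult_left_mono[of 1 "ln (real n) - a" "f n"] by simp
  qed
  then have "(\<Sum>n\<in>{1..N}. f n) \<le>
      (\<Sum>n\<in>{1..N}. f n * (ln (real n) - a) + (1 + a) * (if n \<le> M then f n else 0))"
    by (intro sum_mono) auto
  also have "\<dots> = ((\<Sum>n\<in>{1..N}. f n * ln (real n)) - a * (\<Sum>n\<in>{1..N}. f n)) +
      (1 + a) * (\<Sum>n\<in>{1..N} \<inter> {n. n \<le> M}. f n)"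
    by (simp add: sum.distrib sum_subtractf sum_distrib_left sum_distrib_right algebra_simps
        sum.inter_restrict)
  also have "\<dots> \<le> 0 + (1 + a) * (\<Sum>n\<in>{1..M}. f n)"
  proof (rule add_mono)
    have "(\<Sum>n\<in>{1..N} \<inter> {n. n \<le> M}. f n) \<le> (\<Sum>n\<in>{1..M}. f n)"
      by (rule sum_mono2) (auto simp: nn)
    with a0 show "(1 + a) * (\<Sum>n\<in>{1..N} \<inter> {n. n \<le> M}. f n) \<le> (1 + a) * (\<Sum>n\<in>{1..M}. f n)"
      by (simp add: mult_left_mono)
  qed (use ln_le in simp)
  finally show ?thesis unfolding M_def by simp
qed

lemma summable_on_of_log_mean:
  fixes f :: "nat \<Rightarrow> real"
  assumes cm: "completely_multiplicative f" and nn: "\<And>n. f n \<ge> 0"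
    and mean_finite: "log_mean f \<noteq> \<infinity>"
  shows "f summable_on {1..}"
proof (rule nonneg_bdd_above_summable_on)
  obtain a where mean: "log_mean f = ennreal a" and a0: "a \<ge> 0"
    using mean_finite by (cases "log_mean f") auto
  define C where "C = (1 + a) * (\<Sum>n\<in>{1..nat \<lceil>exp (a + 1)\<rceil>}. f n)"
  show "bdd_above (sum f ` {F. F \<subseteq> {1..} \<and> finite F})"
  proof (rule bdd_aboveI[of _ C], clarify)
    fix F :: "nat set" assume F: "F \<subseteq> {1..}" "finite F"
    then have "sum f F \<le> (\<Sum>n\<in>{1..Max F}. f n)"
      by (intro sum_mono2) (auto simp: nn)
    also have "\<dots> \<le> C"
      unfolding C_def by (rule sum_le_of_sum_ln_le[OF nn a0 sum_ln_le_log_mean[OF cm nn mean a0]])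
    finally show "sum f F \<le> C" .
  qed
qed (simp add: nn)

lemma infsum_ln_eq_log_mean:
  fixes f :: "nat \<Rightarrow> real"
  assumes cm: "completely_multiplicative f" and nn: "\<And>n. f n \<ge> 0"
  shows "(\<Sum>\<^sub>\<infinity>n\<in>{1..}. ennreal (f n * ln (real n))) = log_mean f * (\<Sum>\<^sub>\<infinity>m\<in>{1..}. ennreal (f m))"
proof -
  have "(\<Sum>\<^sub>\<infinity>n\<in>{1..}. ennreal (f n * ln (real n))) =
        (\<Sum>\<^sub>\<infinity>((p, k), m)\<in>prime_exponent_pairs \<times> {1..}. ennreal (ln (real p) * f p ^ k * f m * 1))"
    using infsum_ln_split_prime_power_all[OF cm nn, of "\<lambda>_. 1"] by simp
  also have "\<dots> = (\<Sum>\<^sub>\<infinity>(pk, m)\<in>prime_exponent_pairs \<times> {1..}.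
                      (\<lambda>(p, k). ennreal (ln (real p) * f p ^ k)) pk * ennreal (f m))"
    by (intro infsum_cong) (auto simp: prime_exponent_pairs_def ennreal_mult'' ln_prime_nonneg nn)
  also have "\<dots> = log_mean f * (\<Sum>\<^sub>\<infinity>m\<in>{1..}. ennreal (f m))"
    unfolding log_mean_def by (rule infsum_Times_mult_ennreal)
  finally show ?thesis .
qed

lemma infsum_ln_sq_eq:
  fixes f :: "nat \<Rightarrow> real"
  assumes cm: "completely_multiplicative f" and nn: "\<And>n. f n \<ge> 0"
  shows "(\<Sum>\<^sub>\<infinity>n\<in>{1..}. ennreal (f n * ln (real n) * ln (real n))) =
    log_variance f * (\<Sum>\<^sub>\<infinity>m\<in>{1..}. ennreal (f m)) +
    log_mean f * (\<Sum>\<^sub>\<infinity>m\<in>{1..}. ennreal (f m * ln (real m)))"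
proof -
  define V where "V = (\<lambda>(p, k). ennreal (real k * ln (real p) ^ 2 * f p ^ k))"
  define L where "L = (\<lambda>(p, k). ennreal (ln (real p) * f p ^ k))"
  have "(\<Sum>\<^sub>\<infinity>n\<in>{1..}. ennreal (f n * ln (real n) * ln (real n))) =
        (\<Sum>\<^sub>\<infinity>((p, k), m)\<in>prime_exponent_pairs \<times> {1..}.
           ennreal (ln (real p) * f p ^ k * f m * ln (real (p ^ k * m))))"
    by (rule infsum_ln_split_prime_power_all[OF cm nn]) simp
  also have "\<dots> = (\<Sum>\<^sub>\<infinity>(pk, m)\<in>prime_exponent_pairs \<times> {1..}.
                      V pk * ennreal (f m) + L pk * ennreal (f m * ln (real m)))"
  proof (intro infsum_cong, goal_cases)
    case (1 x)
    then obtain p k m where x: "x = ((p, k), m)" and p: "prime p" and m: "m \<ge> 1"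
      by (auto simp: prime_exponent_pairs_def)
    then have "ln (real (p ^ k * m)) = real k * ln (real p) + ln (real m)"
      by (simp add: ln_mult ln_realpow prime_gt_0_nat)
    then have "ln (real p) * f p ^ k * f m * ln (real (p ^ k * m)) =
        real k * ln (real p) ^ 2 * f p ^ k * f m + ln (real p) * f p ^ k * (f m * ln (real m))"
      by (simp add: algebra_simps power2_eq_square)
    then show ?case
      using x p m nn[of m] nn[of p] ln_prime_nonneg[OF p]
      by (simp add: V_def L_def ennreal_mult''[symmetric] ennreal_plus[symmetric] del: ennreal_plus)
  qed
  also have "\<dots> = (\<Sum>\<^sub>\<infinity>(pk, m)\<in>prime_exponent_pairs \<times> {1..}. V pk * ennreal (f m)) +
                   (\<Sum>\<^sub>\<infinity>(pk, m)\<in>prime_exponent_pairs \<times> {1..}. L pk * ennreal (f m * ln (real m)))"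
    using infsum_add[of "\<lambda>(pk, m). V pk * ennreal (f m)" "prime_exponent_pairs \<times> {1..}"
        "\<lambda>(pk, m). L pk * ennreal (f m * ln (real m))"]
    by (simp add: case_prod_unfold)
  also have "\<dots> = log_variance f * (\<Sum>\<^sub>\<infinity>m\<in>{1..}. ennreal (f m)) +
                   log_mean f * (\<Sum>\<^sub>\<infinity>m\<in>{1..}. ennreal (f m * ln (real m)))"
    unfolding log_variance_def log_mean_def V_def[symmetric] L_def[symmetric] infsum_Times_mult_ennreal ..
  finally show ?thesis .
qed

section \<open>Chebyshev's inequality and Rankin's trick\<close>

lemma infsum_centered_ln_sq_eq:
  fixes f :: "nat \<Rightarrow> real"
  assumes cm: "completely_multiplicative f" and nn: "\<And>n. f n \<ge> 0"
    and mean: "log_mean f = ennreal a" and a0: "a \<ge> 0"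
  shows "(\<Sum>\<^sub>\<infinity>n\<in>{1..}. ennreal (f n * (ln (real n) - a)\<^sup>2)) =
         log_variance f * ennreal (\<Sum>\<^sub>\<infinity>n\<in>{1..}. f n)"
proof -
  define S where "S = (\<Sum>\<^sub>\<infinity>n\<in>{1..}. f n)"
  define E where "E = (\<Sum>\<^sub>\<infinity>n\<in>{1..}. ennreal (f n * (ln (real n) - a)\<^sup>2))"
  have mean_finite: "log_mean f \<noteq> \<infinity>" using mean by simp
  have S0: "S \<ge> 0" unfolding S_def by (rule infsum_nonneg) (simp add: nn)
  have S: "(\<Sum>\<^sub>\<infinity>n\<in>{1..}. ennreal (f n)) = ennreal S"
    unfolding S_def using summable_on_of_log_mean[OF cm nn mean_finite]
    by (rule ennreal_infsum[symmetric]) (simp add: nn)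
  have E1: "(\<Sum>\<^sub>\<infinity>n\<in>{1..}. ennreal (f n * ln (real n))) = ennreal (a * S)"
    using infsum_ln_eq_log_mean[OF cm nn] mean S a0 S0 by (simp add: ennreal_mult)
  have E2: "(\<Sum>\<^sub>\<infinity>n\<in>{1..}. ennreal (f n * ln (real n) * ln (real n))) =
            log_variance f * ennreal S + ennreal (a * (a * S))"
    using infsum_ln_sq_eq[OF cm nn] mean S E1 a0 S0 by (simp add: ennreal_mult)
  have expand: "ennreal (f n * (ln (real n) - a)\<^sup>2) + ennreal (2 * a) * ennreal (f n * ln (real n)) =
      ennreal (f n * ln (real n) * ln (real n)) + ennreal (a\<^sup>2) * ennreal (f n)" if "n \<in> {1..}" for n
  proof -
    have "f n * (ln (real n) - a)\<^sup>2 + 2 * a * (f n * ln (real n)) =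
          f n * ln (real n) * ln (real n) + a\<^sup>2 * f n"
      by (simp add: power2_eq_square algebra_simps)
    moreover have "ln (real n) \<ge> 0" using that by simp
    ultimately show ?thesis
      using a0 nn[of n] by (simp add: ennreal_mult[symmetric] ennreal_plus[symmetric] del: ennreal_plus)
  qed
  have "E + ennreal (2 * a) * ennreal (a * S) =
      (\<Sum>\<^sub>\<infinity>n\<in>{1..}. ennreal (f n * (ln (real n) - a)\<^sup>2) + ennreal (2 * a) * ennreal (f n * ln (real n)))"
    unfolding E_def E1[symmetric] by (simp add: infsum_add infsum_cmult_left_ennreal)
  also have "\<dots> = (\<Sum>\<^sub>\<infinity>n\<in>{1..}. ennreal (f n * ln (real n) * ln (real n)) + ennreal (a\<^sup>2) * ennreal (f n))"
    by (intro infsum_cong expand)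
  also have "\<dots> = log_variance f * ennreal S + ennreal (a * (a * S)) + ennreal (a\<^sup>2) * ennreal S"
    by (simp only: infsum_add ennreal_summable_on infsum_cmult_left_ennreal E2 S)
  \<comment> \<open>the common term 2 a^2 S is finite, so it cancels in ennreal\<close>
  finally have "ennreal (2 * a * a * S) + E = ennreal (2 * a * a * S) + log_variance f * ennreal S"
    using a0 S0 by (simp add: ennreal_mult[symmetric] ennreal_plus[symmetric] power2_eq_square
        algebra_simps del: ennreal_plus)
  then show ?thesis
    unfolding E_def S_def by (subst (asm) ennreal_add_left_cancel) simp
qed

lemma tail_le_log_variance:
  fixes f :: "nat \<Rightarrow> real"
  assumes cm: "completely_multiplicative f" and nn: "\<And>n. f n \<ge> 0"
    and mean: "log_mean f = ennreal a" and a0: "a \<ge> 0"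
    and var: "log_variance f \<le> ennreal B" and B0: "B \<ge> 0"
    and y0: "y > 0" and a_lt: "a < ln y"
  shows "(\<Sum>\<^sub>\<infinity>n\<in>{1..}. f n) - (\<Sum>n\<in>{1..nat \<lfloor>y\<rfloor>}. f n) \<le> B * (\<Sum>\<^sub>\<infinity>n\<in>{1..}. f n) / (ln y - a)\<^sup>2"
proof -
  define S where "S = (\<Sum>\<^sub>\<infinity>n\<in>{1..}. f n)"
  define N where "N = nat \<lfloor>y\<rfloor>"
  have S0: "S \<ge> 0" unfolding S_def by (rule infsum_nonneg) (simp add: nn)
  have mean_finite: "log_mean f \<noteq> \<infinity>" using mean by simp
  have split: "{1..} = {1..N} \<union> {Suc N..}" "{1..N} \<inter> {Suc N..} = {}" by auto
  have summable: "f summable_on {Suc N..}"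
    using summable_on_of_log_mean[OF cm nn mean_finite]
    by (rule summable_on_subset_banach) auto
  have S_split: "S = (\<Sum>n\<in>{1..N}. f n) + infsum f {Suc N..}"
    unfolding S_def split(1) by (subst infsum_Un_disjoint[OF _ summable split(2)]) auto
  have far: "(ln y - a)\<^sup>2 \<le> (ln (real n) - a)\<^sup>2" if "n \<in> {Suc N..}" for n
  proof -
    have "real n \<ge> real N + 1" using that by simp
    moreover have "real N = of_int \<lfloor>y\<rfloor>" using y0 unfolding N_def by simp
    ultimately have "y < real n" by linarith
    then show ?thesis using y0 a_lt by (intro power_mono) auto
  qed
  have "ennreal (infsum f {Suc N..} * (ln y - a)\<^sup>2) = (\<Sum>\<^sub>\<infinity>n\<in>{Suc N..}. ennreal (f n * (ln y - a)\<^sup>2))"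
    by (subst infsum_cmult_left'[symmetric], rule ennreal_infsum)
       (auto simp: nn summable_on_cmult_left summable)
  also have "\<dots> \<le> (\<Sum>\<^sub>\<infinity>n\<in>{Suc N..}. ennreal (f n * (ln (real n) - a)\<^sup>2))"
    by (intro infsum_mono ennreal_leI mult_left_mono far nn) simp_all
  also have "\<dots> \<le> (\<Sum>\<^sub>\<infinity>n\<in>{1..}. ennreal (f n * (ln (real n) - a)\<^sup>2))"
    by (rule infsum_mono_set_ennreal) auto
  also have "\<dots> \<le> ennreal (B * S)"
    unfolding infsum_centered_ln_sq_eq[OF cm nn mean a0] S_def[symmetric]
    using var B0 S0 by (simp add: ennreal_mult mult_right_mono)
  finally have "infsum f {Suc N..} * (ln y - a)\<^sup>2 \<le> B * S"
    using B0 S0 by simp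
  with a_lt S_split show ?thesis
    unfolding S_def[symmetric] N_def[symmetric] by (simp add: pos_le_divide_eq)
qed

lemma sq_le_exp_mult:
  fixes \<alpha> x :: real
  assumes "\<alpha> > 0" "x \<ge> 0"
  shows "x\<^sup>2 \<le> 4 / \<alpha>\<^sup>2 * exp (\<alpha> * x)"
proof -
  have "\<alpha> * x / 2 \<le> exp (\<alpha> * x / 2)"
    using exp_ge_add_one_self[of "\<alpha> * x / 2"] by linarith
  then have "(\<alpha> * x / 2)\<^sup>2 \<le> (exp (\<alpha> * x / 2))\<^sup>2"
    using assms by (intro power_mono) auto
  also have "\<dots> = exp (\<alpha> * x)"
    by (simp add: power2_eq_square exp_add[symmetric])
  finally show ?thesis
    using assms by (simp add: field_simps)
qed

lemma mult_ln_sq_le_powr: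
  fixes \<alpha> :: real
  assumes "\<alpha> > 0" and "prime p" and "k \<ge> 1"
  shows "real k * ln (real p) ^ 2 \<le> 4 / \<alpha>\<^sup>2 * real p powr (real k * \<alpha>)"
proof -
  have "real k * ln (real p) ^ 2 \<le> real k ^ 2 * ln (real p) ^ 2"
    using assms(3) by (intro mult_right_mono) (auto simp: power2_eq_square)
  also have "\<dots> = (real k * ln (real p))\<^sup>2"
    by (simp add: power_mult_distrib)
  also have "\<dots> \<le> 4 / \<alpha>\<^sup>2 * exp (\<alpha> * (real k * ln (real p)))"
    using assms ln_prime_nonneg[of p] by (intro sq_le_exp_mult) auto
  also have "exp (\<alpha> * (real k * ln (real p))) = real p powr (real k * \<alpha>)"
    using assms(2) by (simp add: powr_def prime_gt_0_nat mult_ac)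
  finally show ?thesis .
qed

lemma log_variance_small_part_le:
  fixes f :: "nat \<Rightarrow> real" and T :: real
  assumes nn: "\<And>n. f n \<ge> 0" and T0: "T \<ge> 0"
  shows "(\<Sum>\<^sub>\<infinity>(p, k)\<in>{(p, k). prime p \<and> k \<ge> 1 \<and> real k * ln (real p) \<le> T}.
            ennreal (real k * ln (real p) ^ 2 * f p ^ k)) \<le> ennreal T * log_mean f"
    (is "infsum ?V ?Small \<le> _")
proof -
  define L where "L = (\<lambda>(p, k). ennreal (ln (real p) * f p ^ k))"
  have "infsum ?V ?Small \<le> (\<Sum>\<^sub>\<infinity>x\<in>?Small. ennreal T * L x)"
  proof (rule infsum_mono)
    fix x assume "x \<in> ?Small"
    then obtain p k where x: "x = (p, k)" "prime p" "real k * ln (real p) \<le> T" by auto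
    then have "real k * ln (real p) ^ 2 * f p ^ k \<le> T * (ln (real p) * f p ^ k)"
      using ln_prime_nonneg[OF x(2)] nn[of p]
      by (simp add: power2_eq_square mult.assoc[symmetric] mult_right_mono)
    then show "?V x \<le> ennreal T * L x"
      using T0 ln_prime_nonneg[OF x(2)] nn[of p] unfolding x L_def prod.case
      by (subst ennreal_mult[symmetric]) (auto intro!: ennreal_leI)
  qed simp_all
  also have "\<dots> = ennreal T * infsum L ?Small"
    by (rule infsum_cmult_left_ennreal)
  also have "\<dots> \<le> ennreal T * log_mean f"
    unfolding log_mean_def L_def[symmetric]
    by (intro mult_left_mono infsum_mono_set_ennreal) (auto simp: prime_exponent_pairs_def)
  finally show ?thesis .
qed

lemma log_variance_large_part_le:
  fixes f :: "nat \<Rightarrow> real" and T \<alpha> :: real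
  assumes nn: "\<And>n. f n \<ge> 0" and \<alpha>0: "\<alpha> > 0"
    and summable: "(\<lambda>(p, k). f p ^ k * real p powr (real k * \<alpha>))
                     summable_on {(p, k). prime p \<and> k \<ge> 1 \<and> real k * ln (real p) > T}"
  shows "(\<Sum>\<^sub>\<infinity>(p, k)\<in>{(p, k). prime p \<and> k \<ge> 1 \<and> real k * ln (real p) > T}.
            ennreal (real k * ln (real p) ^ 2 * f p ^ k)) \<le>
         ennreal (4 / \<alpha>\<^sup>2 * (\<Sum>\<^sub>\<infinity>(p, k)\<in>{(p, k). prime p \<and> k \<ge> 1 \<and> real k * ln (real p) > T}.
                                f p ^ k * real p powr (real k * \<alpha>)))"
    (is "infsum ?V ?Large \<le> ennreal (4 / \<alpha>\<^sup>2 * infsum ?g ?Large)")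
proof -
  have g_nonneg: "\<And>x. x \<in> ?Large \<Longrightarrow> ?g x \<ge> 0" by (auto simp: nn)
  then have g0: "infsum ?g ?Large \<ge> 0" by (rule infsum_nonneg)
  have "infsum ?V ?Large \<le> (\<Sum>\<^sub>\<infinity>x\<in>?Large. ennreal (4 / \<alpha>\<^sup>2) * ennreal (?g x))"
  proof (rule infsum_mono)
    fix x assume "x \<in> ?Large"
    then obtain p k where x: "x = (p, k)" "prime p" "k \<ge> 1" by auto
    then have "real k * ln (real p) ^ 2 * f p ^ k \<le> 4 / \<alpha>\<^sup>2 * (f p ^ k * real p powr (real k * \<alpha>))"
      using mult_right_mono[OF mult_ln_sq_le_powr[OF \<alpha>0] zero_le_power[OF nn]] by (auto simp: mult_ac)
    then show "?V x \<le> ennreal (4 / \<alpha>\<^sup>2) * ennreal (?g x)"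
      using \<alpha>0 nn[of p] unfolding x prod.case
      by (subst ennreal_mult[symmetric]) (auto intro!: ennreal_leI)
  qed simp_all
  also have "\<dots> = ennreal (4 / \<alpha>\<^sup>2) * ennreal (infsum ?g ?Large)"
    using ennreal_infsum[OF summable g_nonneg] by (simp only: infsum_cmult_left_ennreal)
  also have "\<dots> = ennreal (4 / \<alpha>\<^sup>2 * infsum ?g ?Large)"
    using g0 by (intro ennreal_mult[symmetric]) auto
  finally show ?thesis .
qed

lemma log_variance_le:
  fixes f :: "nat \<Rightarrow> real" and T \<alpha> :: real
  assumes nn: "\<And>n. f n \<ge> 0" and T0: "T \<ge> 0" and \<alpha>0: "\<alpha> > 0"
    and mean: "log_mean f = ennreal a" and a0: "a \<ge> 0"
    and summable: "(\<lambda>(p, k). f p ^ k * real p powr (real k * \<alpha>))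
                     summable_on {(p, k). prime p \<and> k \<ge> 1 \<and> real k * ln (real p) > T}"
  shows "log_variance f \<le> ennreal (T * a + 4 / \<alpha>\<^sup>2 *
           (\<Sum>\<^sub>\<infinity>(p, k)\<in>{(p, k). prime p \<and> k \<ge> 1 \<and> real k * ln (real p) > T}.
              f p ^ k * real p powr (real k * \<alpha>)))"
    (is "_ \<le> ennreal (T * a + 4 / \<alpha>\<^sup>2 * infsum ?g ?Large)")
proof -
  define Small where "Small = {(p, k). prime p \<and> k \<ge> 1 \<and> real k * ln (real p) \<le> T}"
  define V where "V = (\<lambda>(p, k). ennreal (real k * ln (real p) ^ 2 * f p ^ k))"
  have split: "prime_exponent_pairs = Small \<union> ?Large" "Small \<inter> ?Large = {}"
    by (auto simp: prime_exponent_pairs_def Small_def)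
  have g0: "infsum ?g ?Large \<ge> 0" by (rule infsum_nonneg) (auto simp: nn)
  have "log_variance f = infsum V Small + infsum V ?Large"
    unfolding log_variance_def V_def[symmetric] split(1)
    by (rule infsum_Un_disjoint) (use split(2) in simp_all)
  also have "\<dots> \<le> ennreal T * log_mean f + ennreal (4 / \<alpha>\<^sup>2 * infsum ?g ?Large)"
    unfolding V_def Small_def
    by (intro add_mono log_variance_small_part_le log_variance_large_part_le nn T0 \<alpha>0 summable)
  also have "\<dots> = ennreal (T * a + 4 / \<alpha>\<^sup>2 * infsum ?g ?Large)"
    using mean T0 a0 g0 by (simp add: ennreal_mult)
  finally show ?thesis .
qed

lemma chebyshev_parameter_bound:
  fixes l L a s :: real
  assumes l: "l > 0" and L: "L > 0" and a0: "a \<ge> 0" and a_lt: "a < l - l / L" and s0: "s \<ge> 0"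
  shows "(l / L ^ 4 * a + 4 / (L\<^sup>2 / l)\<^sup>2 * s) / (l - a)\<^sup>2 \<le> (1 + 4 * s) / L\<^sup>2"
proof -
  define B where "B = l / L ^ 4 * a + 4 / (L\<^sup>2 / l)\<^sup>2 * s"
  have "B \<ge> 0" unfolding B_def using l L a0 s0 by simp
  moreover have "0 < l / L" using l L by simp
  moreover from this a_lt have "l / L \<le> l - a" "a \<le> l" by auto
  ultimately have "B / (l - a)\<^sup>2 \<le> B / (l / L)\<^sup>2"
    by (intro divide_left_mono power_mono mult_pos_pos zero_less_power) auto
  also have "\<dots> = a * L\<^sup>2 / (l * L\<^sup>2 * L\<^sup>2) + 4 * s / L\<^sup>2"
    unfolding B_def using l L by (simp add: field_simps power2_eq_square power4_eq_xxxx)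
  also have "a * L\<^sup>2 / (l * L\<^sup>2 * L\<^sup>2) \<le> l * L\<^sup>2 / (l * L\<^sup>2 * L\<^sup>2)"
    using \<open>a \<le> l\<close> l L by (intro divide_right_mono mult_right_mono) auto
  also have "l * L\<^sup>2 / (l * L\<^sup>2 * L\<^sup>2) = 1 / L\<^sup>2"
    using l L by simp
  finally show ?thesis unfolding B_def by (simp add: add_divide_distrib)
qed

lemma partial_sum_ratio_bounds:
  fixes f :: "nat \<Rightarrow> real" and y :: real
  defines "\<alpha> \<equiv> (ln (ln y))\<^sup>2 / ln y" and "T \<equiv> ln y / (ln (ln y)) ^ 4"
  defines "s \<equiv> \<Sum>\<^sub>\<infinity>(p, k)\<in>{(p, k). prime p \<and> k \<ge> 1 \<and> real k * ln (real p) > T}.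
                 f p ^ k * real p powr (real k * \<alpha>)"
  assumes cm: "completely_multiplicative f" and nn: "\<And>n. f n \<ge> 0"
    and lt1: "\<And>p. prime p \<Longrightarrow> f p < 1"
    and summable: "(\<lambda>p. ln (real p) * (f p / (1 - f p))) summable_on {p. prime p}"
    and bound: "(\<Sum>\<^sub>\<infinity>p\<in>{p. prime p}. ln (real p) * (f p / (1 - f p))) < ln y - ln y / ln (ln y)"
    and y: "y > exp 1"
    and summable_large: "(\<lambda>(p, k). f p ^ k * real p powr (real k * \<alpha>))
                           summable_on {(p, k). prime p \<and> k \<ge> 1 \<and> real k * ln (real p) > T}"
  shows "1 - (1 + 4 * s) / (ln (ln y))\<^sup>2 \<le> (\<Sum>n\<in>{1..nat \<lfloor>y\<rfloor>}. f n) / (\<Sum>\<^sub>\<infinity>n\<in>{1..}. f n)"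
    and "(\<Sum>n\<in>{1..nat \<lfloor>y\<rfloor>}. f n) / (\<Sum>\<^sub>\<infinity>n\<in>{1..}. f n) \<le> 1"
proof -
  define a where "a = (\<Sum>\<^sub>\<infinity>p\<in>{p. prime p}. ln (real p) * (f p / (1 - f p)))"
  define P where "P = (\<Sum>n\<in>{1..nat \<lfloor>y\<rfloor>}. f n)"
  define S where "S = (\<Sum>\<^sub>\<infinity>n\<in>{1..}. f n)"
  have y0: "y > 0" using y by (meson exp_gt_zero less_trans)
  have l: "ln y > 1" using y y0 by (metis exp_gt_zero ln_exp ln_less_cancel_iff)
  then have L: "ln (ln y) > 0" by simp
  have a0: "a \<ge> 0"
    unfolding a_def by (rule infsum_nonneg) (auto simp: nn lt1 ln_prime_nonneg less_imp_le)
  have mean: "log_mean f = ennreal a"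
    unfolding a_def by (rule log_mean_eq[OF nn lt1 summable])
  then have mean_finite: "log_mean f \<noteq> \<infinity>" by simp
  have a_lt: "a < ln y - ln y / ln (ln y)" using bound unfolding a_def .
  have s0: "s \<ge> 0" unfolding s_def by (rule infsum_nonneg) (auto simp: nn)
  have B0: "T * a + 4 / \<alpha>\<^sup>2 * s \<ge> 0" unfolding T_def using l L a0 s0 by simp
  have "0 < ln y / ln (ln y)" using l L by simp
  with a_lt have a_lt_l: "a < ln y" by linarith
  have var: "log_variance f \<le> ennreal (T * a + 4 / \<alpha>\<^sup>2 * s)"
    unfolding s_def using l L
    by (intro log_variance_le[OF nn _ _ mean a0 summable_large]) (simp_all add: T_def \<alpha>_def)
  have tail: "S - P \<le> (T * a + 4 / \<alpha>\<^sup>2 * s) * S / (ln y - a)\<^sup>2"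
    unfolding S_def P_def by (rule tail_le_log_variance[OF cm nn mean a0 var B0 y0 a_lt_l])
  have P_le_S: "P \<le> S"
    unfolding P_def S_def using summable_on_of_log_mean[OF cm nn mean_finite]
    by (subst infsum_finite[symmetric], simp, intro infsum_mono_neutral) (auto simp: nn)
  have "nat \<lfloor>y\<rfloor> \<ge> 1" using y exp_ge_add_one_self[of 1] by linarith
  then have "(\<Sum>n\<in>{1..1}. f n) \<le> P" unfolding P_def by (intro sum_mono2) (auto simp: nn)
  with cm have P1: "1 \<le> P" by (simp add: completely_multiplicative_def)
  with P_le_S have S0: "S > 0" by simp
  then show "P / S \<le> 1" using P_le_S by simp
  have "1 - P / S = (S - P) / S" using S0 by (simp add: field_simps)
  also have "\<dots> \<le> (T * a + 4 / \<alpha>\<^sup>2 * s) / (ln y - a)\<^sup>2"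
    using tail S0 by (simp add: divide_le_eq field_simps)
  also have "\<dots> \<le> (1 + 4 * s) / (ln (ln y))\<^sup>2"
    unfolding T_def \<alpha>_def using l L a0 a_lt s0 by (intro chebyshev_parameter_bound) auto
  finally show "1 - (1 + 4 * s) / (ln (ln y))\<^sup>2 \<le> P / S" by simp
qed

lemma tendsto_one_minus_div_ln_ln_sq:
  fixes s y :: "nat \<Rightarrow> real"
  assumes s: "s \<longlonglongrightarrow> 0" and y: "filterlim y at_top sequentially"
  shows "(\<lambda>i. 1 - (1 + 4 * s i) / (ln (ln (y i)))\<^sup>2) \<longlonglongrightarrow> 1"
proof -
  have "filterlim (\<lambda>i. ln (ln (y i))) at_top sequentially"
    using filterlim_compose[OF ln_at_top filterlim_compose[OF ln_at_top y]] .
  then have "(\<lambda>i. inverse (ln (ln (y i)))) \<longlonglongrightarrow> 0"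
    by (rule tendsto_inverse_0_at_top)
  with s have "(\<lambda>i. 1 - (1 + 4 * s i) * (inverse (ln (ln (y i))))\<^sup>2) \<longlonglongrightarrow> 1 - (1 + 4 * 0) * 0\<^sup>2"
    by (intro tendsto_intros)
  then show ?thesis
    by (simp add: power_inverse divide_inverse)
qed

theorem mainTheorem9:
  fixes f :: "nat \<Rightarrow> nat \<Rightarrow> real" and y :: "nat \<Rightarrow> real"
  assumes mult: "\<And>i. completely_multiplicative (f i)"
    and nonneg: "\<And>i n. f i n \<ge> 0"
    and lt1: "\<And>i p. prime p \<Longrightarrow> f i p < 1"
    and y_lim: "filterlim y at_top sequentially"
    and sum1: "\<And>i. (\<lambda>p. ln (real p) * (f i p / (1 - f i p))) summable_on {p. prime p}"
    and sum1_bound: "\<And>i. (\<Sum>\<^sub>\<infinity>p\<in>{p. prime p}. ln (real p) * (f i p / (1 - f i p)))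
                        < ln (y i) - ln (y i) / ln (ln (y i))"
    and sum2: "eventually (\<lambda>i. (\<lambda>(p, k). f i p ^ k * real p powr (real k * ((ln (ln (y i)))\<^sup>2 / ln (y i))))
                  summable_on {(p, k). prime p \<and> k \<ge> 1 \<and> real k * ln (real p) > ln (y i) / (ln (ln (y i))) ^ 4})
                sequentially"
    and sum2_lim: "(\<lambda>i. \<Sum>\<^sub>\<infinity>(p, k)\<in>{(p, k). prime p \<and> k \<ge> 1 \<and> real k * ln (real p) > ln (y i) / (ln (ln (y i))) ^ 4}.
                      f i p ^ k * real p powr (real k * ((ln (ln (y i)))\<^sup>2 / ln (y i)))) \<longlonglongrightarrow> 0"
  shows "(\<forall>i. f i summable_on {1..}) \<and>
         (\<lambda>i. \<Sum>n\<in>{1..nat \<lfloor>y i\<rfloor>}. f i n) \<sim>[sequentially] (\<lambda>i. \<Sum>\<^sub>\<infinity>n\<in>{1..}. f i n)"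
proof
  show "\<forall>i. f i summable_on {1..}"
    by (intro allI summable_on_of_log_mean[OF mult nonneg]) (simp add: log_mean_eq[OF nonneg lt1 sum1])
  define s where "s = (\<lambda>i. \<Sum>\<^sub>\<infinity>(p, k)\<in>{(p, k). prime p \<and> k \<ge> 1 \<and> real k * ln (real p) > ln (y i) / (ln (ln (y i))) ^ 4}.
                      f i p ^ k * real p powr (real k * ((ln (ln (y i)))\<^sup>2 / ln (y i))))"
  define lower where "lower = (\<lambda>i. 1 - (1 + 4 * s i) / (ln (ln (y i)))\<^sup>2)"
  define ratio where "ratio = (\<lambda>i. (\<Sum>n\<in>{1..nat \<lfloor>y i\<rfloor>}. f i n) / (\<Sum>\<^sub>\<infinity>n\<in>{1..}. f i n))"
  have "eventually (\<lambda>i. y i > exp 1) sequentially"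
    using y_lim by (simp add: filterlim_at_top_dense)
  with sum2 have bounds: "eventually (\<lambda>i. lower i \<le> ratio i \<and> ratio i \<le> 1) sequentially"
  proof eventually_elim
    case (elim i)
    show ?case
      unfolding lower_def ratio_def s_def
      using partial_sum_ratio_bounds[OF mult nonneg lt1 sum1 sum1_bound elim(2) elim(1)] by blast
  qed
  have "lower \<longlonglongrightarrow> 1"
    unfolding lower_def s_def by (rule tendsto_one_minus_div_ln_ln_sq[OF sum2_lim y_lim])
  moreover have "eventually (\<lambda>i. lower i \<le> ratio i) sequentially"
    and "eventually (\<lambda>i. ratio i \<le> 1) sequentially"
    using bounds by (auto elim: eventually_mono)
  ultimately have "ratio \<longlonglongrightarrow> 1"
    using tendsto_sandwich[OF _ _ _ tendsto_const] by blast
  then show "(\<lambda>i. \<Sum>n\<in>{1..nat \<lfloor>y i\<rfloor>}. f i n) \<sim>[sequentially] (\<lambda>i. \<Sum>\<^sub>\<infinity>n\<in>{1..}. f i n)"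
    unfolding ratio_def by (rule asymp_equivI')
qed

end
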